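(* If a presheaf $P\colon\mathbb{O}\to\mathbf{Set}$ preserves pullbacks, then so do $\mathcal{P}_f P$, $\Delta P$ and $BP$. That is, $\mathcal{P}_f$, $\Delta$ and $B$ restrict to endofunctors on the full subcategory of $\mathbf{Set}^{\mathbb{O}}$ formed by pullback-preserving presheaves.
   Context: Fix a finite set $Act$ of action labels. An $Act$-labelled poset is $O=(X_O,\preccurlyeq_O,l_O)$ with partial order $\preccurlyeq_O$ and $l_O\colon X_O\to Act$; $|O|=\{(x,l_O(x))\}$. Morphisms preserve order and labels; order-embeddings also reflect order. $\mathbb{O}$ is the category whose objects are chosen representatives of the isomorphism classes of finite $Act$-labelled posets and whose morphisms are order-embeddings. $\boldsymbol{\delta}\colon\mathbb{O}\to\mathbb{O}$: $\boldsymbol{\delta}(O)$ is (the representative of) the poset obtained from $O$ by adding, for each antichain $K\subseteq|O|$ (including $\emptyset$) and each $a\in Act$, a fresh event $new(O,K,a)$ labelled $a$ above exactly the elements of $K$ (reflexive-transitively closed); for an order-embedding $\sigma\colon O\to O'$, $\boldsymbol{\delta}(\sigma)$ acts as $\sigma$ on old events and sends $new(O,K,a)$ to $new(O',\sigma(K),a)$. $\mathbf{Set}^{\mathbb{O}}$: functors $\mathbb{O}\to\mathbf{Set}$. $\mathcal{E}(O)=|O|$, with renaming on morphisms. $\mathcal{P}_f$: pointwise finite powerset (direct images). $\Delta P=P\circ\boldsymbol{\delta}$. $\mathcal{L}(O)=Act\times\mathcal{P}_f(\mathcal{E}(O))$. $BP=\mathcal{P}_f(\mathcal{L}\times\Delta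 P)$, products pointwise. *)

theory Defs
  imports "HOL-Library.FuncSet"
begin

text \<open>An Act-labelled poset with events of type 'e; Act is the (finite) type 'a.\<close>
record ('e, 'a) lposet =
  lcarrier :: "'e set"
  lle :: "'e \<Rightarrow> 'e \<Rightarrow> bool"
  llab :: "'e \<Rightarrow> 'a"

definition lposet :: "('e, 'a) lposet \<Rightarrow> bool" where
  "lposet X \<longleftrightarrow> finite (lcarrier X)
     \<and> (\<forall>x\<in>lcarrier X. lle X x x)
     \<and> (\<forall>x\<in>lcarrier X. \<forall>y\<in>lcarrier X. lle X x y \<and> lle X y x \<longrightarrow> x = y)
     \<and> (\<forall>x\<in>lcarrier X. \<forall>y\<in>lcarrier X. \<forall>z\<in>lcarrier X.
          lle X x y \<and> lle X y z \<longrightarrow> lle X x z)"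

definition order_emb :: "('e, 'a) lposet \<Rightarrow> ('f, 'a) lposet \<Rightarrow> ('e \<Rightarrow> 'f) \<Rightarrow> bool" where
  "order_emb X Y f \<longleftrightarrow> f \<in> lcarrier X \<rightarrow> lcarrier Y
     \<and> (\<forall>x\<in>lcarrier X. llab Y (f x) = llab X x)
     \<and> (\<forall>x\<in>lcarrier X. \<forall>y\<in>lcarrier X. lle Y (f x) (f y) \<longleftrightarrow> lle X x y)"

definition lpo_iso :: "('e, 'a) lposet \<Rightarrow> ('f, 'a) lposet \<Rightarrow> bool" where
  "lpo_iso X Y \<longleftrightarrow> (\<exists>f. bij_betw f (lcarrier X) (lcarrier Y) \<and> order_emb X Y f)"

text \<open>Representatives live on carriers of type nat.  The chosen representative
  of a finite labelled poset depends only on its isomorphism class.\<close>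
definition rep :: "('e, 'a) lposet \<Rightarrow> (nat, 'a) lposet" where
  "rep X = (SOME Y. lposet Y \<and> lpo_iso Y X)"

definition obs :: "(nat, 'a) lposet set" where
  "obs = {X. lposet X \<and> rep X = X}"

definition hom :: "(nat, 'a) lposet \<Rightarrow> (nat, 'a) lposet \<Rightarrow> (nat \<Rightarrow> nat) set" where
  "hom X Y = {f. order_emb X Y f \<and> f \<in> extensional (lcarrier X)}"

definition idm :: "(nat, 'a) lposet \<Rightarrow> nat \<Rightarrow> nat" where
  "idm X = restrict id (lcarrier X)"

definition comp :: "(nat, 'a) lposet \<Rightarrow> (nat \<Rightarrow> nat) \<Rightarrow> (nat \<Rightarrow> nat) \<Rightarrow> nat \<Rightarrow> nat" where
  "comp X g f = compose (lcarrier X) g f"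

text \<open>Pullback squares in \<open>\<X>\<close>:  D --p--> B --f--> A  and  D --q--> C --g--> A.\<close>
definition is_pullback ::
  "(nat, 'a) lposet \<Rightarrow> (nat, 'a) lposet \<Rightarrow> (nat, 'a) lposet \<Rightarrow> (nat, 'a) lposet \<Rightarrow>
   (nat \<Rightarrow> nat) \<Rightarrow> (nat \<Rightarrow> nat) \<Rightarrow> (nat \<Rightarrow> nat) \<Rightarrow> (nat \<Rightarrow> nat) \<Rightarrow> bool" where
  "is_pullback A B C D f g p q \<longleftrightarrow>
     A \<in> obs \<and> B \<in> obs \<and> C \<in> obs \<and> D \<in> obs \<and>
     f \<in> hom B A \<and> g \<in> hom C A \<and> p \<in> hom D B \<and> q \<in> hom D C \<and>
     comp D f p = comp D g q \<and>
     (\<forall>E\<in>obs. \<forall>u\<in>hom E B. \<forall>v\<in>hom E C. comp E f u = comp E g v \<longrightarrow>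
        (\<exists>!h. h \<in> hom E D \<and> comp E p h = u \<and> comp E q h = v))"

definition antichain :: "('e, 'a) lposet \<Rightarrow> 'e set \<Rightarrow> bool" where
  "antichain X K \<longleftrightarrow> (\<forall>x\<in>K. \<forall>y\<in>K. lle X x y \<longrightarrow> x = y)"

text \<open>Raw construction: old events are Inl x, the fresh event new(X,K,a) is Inr (K,a).\<close>
fun draw_le :: "('e, 'a) lposet \<Rightarrow> 'e + ('e set \<times> 'a) \<Rightarrow> 'e + ('e set \<times> 'a) \<Rightarrow> bool" where
  "draw_le X (Inl x) (Inl y) = lle X x y"
| "draw_le X (Inl x) (Inr (K, a)) = (\<exists>k\<in>K. lle X x k)"
| "draw_le X (Inr (K, a)) (Inr (K', a')) = ((K, a) = (K', a'))"
| "draw_le X (Inr _) (Inl _) = False"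

fun draw_lab :: "('e, 'a) lposet \<Rightarrow> 'e + ('e set \<times> 'a) \<Rightarrow> 'a" where
  "draw_lab X (Inl x) = llab X x"
| "draw_lab X (Inr (K, a)) = a"

definition draw :: "('e, 'a) lposet \<Rightarrow> ('e + ('e set \<times> 'a), 'a) lposet" where
  "draw X = \<lparr> lcarrier = Inl ` lcarrier X \<union>
                 {Inr (K, a) | K a. K \<subseteq> lcarrier X \<and> antichain X K},
              lle = draw_le X, llab = draw_lab X \<rparr>"

fun draw_map :: "('e \<Rightarrow> 'f) \<Rightarrow> 'e + ('e set \<times> 'a) \<Rightarrow> 'f + ('f set \<times> 'a)" where
  "draw_map s (Inl x) = Inl (s x)"
| "draw_map s (Inr (K, a)) = Inr (s ` K, a)"

definition delta :: "(nat, 'a) lposet \<Rightarrow> (nat, 'a) lposet" where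
  "delta X = rep (draw X)"

definition delta_iso :: "(nat, 'a) lposet \<Rightarrow> nat + (nat set \<times> 'a) \<Rightarrow> nat" where
  "delta_iso X = (SOME f. bij_betw f (lcarrier (draw X)) (lcarrier (delta X))
                          \<and> order_emb (draw X) (delta X) f)"

definition delta_mor :: "(nat, 'a) lposet \<Rightarrow> (nat, 'a) lposet \<Rightarrow> (nat \<Rightarrow> nat) \<Rightarrow> nat \<Rightarrow> nat" where
  "delta_mor X Y s = restrict
     (\<lambda>y. delta_iso Y (draw_map s (inv_into (lcarrier (draw X)) (delta_iso X) y)))
     (lcarrier (delta X))"

record ('a, 'x) psh =
  pobj :: "(nat, 'a) lposet \<Rightarrow> 'x set"
  pmor :: "(nat, 'a) lposet \<Rightarrow> (nat, 'a) lposet \<Rightarrow> (nat \<Rightarrow> nat) \<Rightarrow> 'x \<Rightarrow> 'x"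

definition is_functor :: "('a, 'x) psh \<Rightarrow> bool" where
  "is_functor F \<longleftrightarrow>
     (\<forall>X\<in>obs. \<forall>Y\<in>obs. \<forall>s\<in>hom X Y. \<forall>x\<in>pobj F X. pmor F X Y s x \<in> pobj F Y) \<and>
     (\<forall>X\<in>obs. \<forall>x\<in>pobj F X. pmor F X X (idm X) x = x) \<and>
     (\<forall>X\<in>obs. \<forall>Y\<in>obs. \<forall>Z\<in>obs. \<forall>s\<in>hom X Y. \<forall>t\<in>hom Y Z. \<forall>x\<in>pobj F X.
        pmor F X Z (comp X t s) x = pmor F Y Z t (pmor F X Y s x))"

definition set_pullback ::
  "'x set \<Rightarrow> 'x set \<Rightarrow> 'x set \<Rightarrow> 'x set \<Rightarrow>
   ('x \<Rightarrow> 'x) \<Rightarrow> ('x \<Rightarrow> 'x) \<Rightarrow> ('x \<Rightarrow> 'x) \<Rightarrow> ('x \<Rightarrow> 'x) \<Rightarrow> bool" where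
  "set_pullback XA XB XC XD f g p q \<longleftrightarrow>
     (\<forall>d\<in>XD. f (p d) = g (q d)) \<and>
     (\<forall>b\<in>XB. \<forall>c\<in>XC. f b = g c \<longrightarrow> (\<exists>!d. d \<in> XD \<and> p d = b \<and> q d = c))"

definition preserves_pullbacks :: "('a, 'x) psh \<Rightarrow> bool" where
  "preserves_pullbacks F \<longleftrightarrow>
     (\<forall>A B C D f g p q. is_pullback A B C D f g p q \<longrightarrow>
        set_pullback (pobj F A) (pobj F B) (pobj F C) (pobj F D)
          (pmor F B A f) (pmor F C A g) (pmor F D B p) (pmor F D C q))"

definition EP :: "('a, nat \<times> 'a) psh" where
  "EP = \<lparr> pobj = (\<lambda>X. {(x, llab X x) | x. x \<in> lcarrier X}),
          pmor = (\<lambda>X Y s (x, l). (s x, l)) \<rparr>"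

definition PfP :: "('a, 'x) psh \<Rightarrow> ('a, 'x set) psh" where
  "PfP F = \<lparr> pobj = (\<lambda>X. {S. finite S \<and> S \<subseteq> pobj F X}),
             pmor = (\<lambda>X Y s S. pmor F X Y s ` S) \<rparr>"

definition DeltaP :: "('a, 'x) psh \<Rightarrow> ('a, 'x) psh" where
  "DeltaP F = \<lparr> pobj = (\<lambda>X. pobj F (delta X)),
                pmor = (\<lambda>X Y s. pmor F (delta X) (delta Y) (delta_mor X Y s)) \<rparr>"

definition prodP :: "('a, 'x) psh \<Rightarrow> ('a, 'y) psh \<Rightarrow> ('a, 'x \<times> 'y) psh" where
  "prodP F G = \<lparr> pobj = (\<lambda>X. pobj F X \<times> pobj G X),
                 pmor = (\<lambda>X Y s (x, y). (pmor F X Y s x, pmor G X Y s y)) \<rparr>"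

definition ActP :: "('a, 'a) psh" where
  "ActP = \<lparr> pobj = (\<lambda>X. UNIV), pmor = (\<lambda>X Y s a. a) \<rparr>"

definition LP :: "('a, 'a \<times> (nat \<times> 'a) set) psh" where
  "LP = prodP ActP (PfP EP)"

definition BP :: "('a, 'x) psh \<Rightarrow> ('a, (('a \<times> (nat \<times> 'a) set) \<times> 'x) set) psh" where
  "BP F = PfP (prodP LP (DeltaP F))"

end

theory Submission
  imports Defs
begin

text \<open>Taking carriers preserves pullbacks of \<open>\<X>\<close>, and conversely a
  commutative square in \<open>\<X>\<close> whose square of carriers is a pullback of sets is a pullback: the
  mediating map is forced pointwise and is an order-embedding because \<open>p\<close> is one.
  A pullback-preserving presheaf sends every morphism to an injection, since the kernel pair
  of an embedding is trivial.  In a pullback of sets with injective legs, finite subsets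
  \<open>S\<close>, \<open>T\<close> with \<open>f S = g T\<close> lift uniquely to the preimage \<open>p\<^sup>-\<^sup>1 S\<close>; this gives \<open>\<P>\<^sub>f\<close>,
  and, applied to antichains, shows that the raw construction behind \<open>\<delta>\<close> maps pullbacks
  to pullbacks of carriers, which transfers to \<open>\<delta>\<close> along the chosen isomorphisms.  Products
  are handled componentwise.\<close>

section \<open>Labelled posets and the category \<open>\<X>\<close>\<close>

lemma lposetD:
  assumes "lposet X"
  shows "finite (lcarrier X)" "x \<in> lcarrier X \<Longrightarrow> lle X x x"
    "x \<in> lcarrier X \<Longrightarrow> y \<in> lcarrier X \<Longrightarrow> lle X x y \<Longrightarrow> lle X y x \<Longrightarrow> x = y"
    "x \<in> lcarrier X \<Longrightarrow> y \<in> lcarrier X \<Longrightarrow> z \<in> lcarrier X \<Longrightarrow> lle X x y \<Longrightarrow> lle X y z \<Longrightarrow> lle X x z"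
  using assms unfolding lposet_def by blast+

lemma order_embD:
  assumes "order_emb X Y f"
  shows "x \<in> lcarrier X \<Longrightarrow> f x \<in> lcarrier Y" "x \<in> lcarrier X \<Longrightarrow> llab Y (f x) = llab X x"
    "x \<in> lcarrier X \<Longrightarrow> y \<in> lcarrier X \<Longrightarrow> lle Y (f x) (f y) = lle X x y"
  using assms unfolding order_emb_def by auto

lemma order_emb_inj:
  assumes "lposet X" "order_emb X Y f" shows "inj_on f (lcarrier X)"
proof (rule inj_onI)
  fix x y assume xy: "x \<in> lcarrier X" "y \<in> lcarrier X" "f x = f y"
  then have "lle X x y" "lle X y x"
    using order_embD(3)[OF assms(2)] lposetD(2)[OF assms(1)] by metis+
  then show "x = y" using lposetD(3)[OF assms(1)] xy by blast
qed

lemma order_emb_cong: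
  assumes "order_emb X Y f" "\<And>x. x \<in> lcarrier X \<Longrightarrow> f x = f' x" shows "order_emb X Y f'"
  using assms unfolding order_emb_def Pi_def by auto

lemma order_emb_comp:
  assumes "order_emb X Y f" "order_emb Y Z g" shows "order_emb X Z (\<lambda>x. g (f x))"
  using assms unfolding order_emb_def Pi_def by auto

lemma order_emb_inv_into:
  assumes "bij_betw f (lcarrier X) (lcarrier Y)" "order_emb X Y f"
  shows "order_emb Y X (inv_into (lcarrier X) f)"
proof -
  have "inv_into (lcarrier X) f y \<in> lcarrier X" "f (inv_into (lcarrier X) f y) = y"
    if "y \<in> lcarrier Y" for y
    using assms(1) that unfolding bij_betw_def by (auto simp: inv_into_into f_inv_into_f)
  then show ?thesis
    using assms(2) unfolding order_emb_def by (metis (no_types, lifting) Pi_I)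
qed

lemma order_emb_factor:
  assumes "order_emb D B p" "order_emb E B u" "\<And>e. e \<in> lcarrier E \<Longrightarrow> h e \<in> lcarrier D"
    "\<And>e. e \<in> lcarrier E \<Longrightarrow> p (h e) = u e"
  shows "order_emb E D h"
  using assms unfolding order_emb_def by (simp add: Pi_iff) metis

lemma lpo_iso_sym: "lpo_iso X Y \<Longrightarrow> lpo_iso Y X"
  unfolding lpo_iso_def using bij_betw_inv_into order_emb_inv_into by blast

lemma lpo_iso_trans: "lpo_iso X Y \<Longrightarrow> lpo_iso Y Z \<Longrightarrow> lpo_iso X Z"
  unfolding lpo_iso_def
proof (elim exE conjE)
  fix f g assume "bij_betw f (lcarrier X) (lcarrier Y)" "order_emb X Y f"
    "bij_betw g (lcarrier Y) (lcarrier Z)" "order_emb Y Z g"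
  then show "\<exists>h. bij_betw h (lcarrier X) (lcarrier Z) \<and> order_emb X Z h"
    using bij_betw_trans[of f _ _ g] order_emb_comp[of X Y f Z g]
    by (intro exI[of _ "\<lambda>x. g (f x)"]) (simp add: o_def)
qed

lemma lposet_if_inj_order_emb:
  assumes X: "lposet X" and h: "order_emb Y X h" "inj_on h (lcarrier Y)" and "finite (lcarrier Y)"
  shows "lposet Y"
  unfolding lposet_def
proof (intro conjI ballI impI)
  fix x y z assume x: "x \<in> lcarrier Y" and y: "y \<in> lcarrier Y" and z: "z \<in> lcarrier Y"
  note hx = order_embD(1)[OF h(1) x] and hy = order_embD(1)[OF h(1) y]
    and hz = order_embD(1)[OF h(1) z]
  show "lle Y x x" using lposetD(2)[OF X hx] order_embD(3)[OF h(1) x x] by simp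
  show "x = y" if "lle Y x y \<and> lle Y y x"
    using that lposetD(3)[OF X hx hy] order_embD(3)[OF h(1)] inj_onD[OF h(2) _ x y] x y by blast
  show "lle Y x z" if "lle Y x y \<and> lle Y y z"
    using that lposetD(4)[OF X hx hy hz] order_embD(3)[OF h(1)] x y z by blast
qed fact

lemma ex_nat_lposet_iso:
  assumes "lposet (X :: ('e, 'a) lposet)"
  shows "\<exists>Y :: (nat, 'a) lposet. lposet Y \<and> lpo_iso Y X"
proof -
  obtain h where h: "bij_betw h {0..<card (lcarrier X)} (lcarrier X)"
    using ex_bij_betw_nat_finite lposetD(1)[OF assms] by blast
  define Y where "Y = \<lparr>lcarrier = {0..<card (lcarrier X)}, lle = (\<lambda>a b. lle X (h a) (h b)),
     llab = (\<lambda>a. llab X (h a))\<rparr>"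
  have hY: "bij_betw h (lcarrier Y) (lcarrier X)" using h by (simp add: Y_def)
  have "order_emb Y X h" using hY unfolding order_emb_def bij_betw_def by (auto simp: Y_def)
  then have "lpo_iso Y X" using hY unfolding lpo_iso_def by blast
  moreover have "lposet Y"
    using lposet_if_inj_order_emb[OF assms \<open>order_emb Y X h\<close>] hY
    by (simp add: bij_betw_def Y_def)
  ultimately show ?thesis by blast
qed

lemma rep_lposet: "lposet X \<Longrightarrow> lposet (rep X)"
  and rep_iso: "lposet X \<Longrightarrow> lpo_iso (rep X) X"
  using someI_ex[OF ex_nat_lposet_iso] unfolding rep_def by auto

lemma rep_cong:
  assumes "lpo_iso X X'" shows "rep X = rep X'"
proof -
  have "(\<lambda>Y. lposet Y \<and> lpo_iso Y X) = (\<lambda>Y. lposet Y \<and> lpo_iso Y X')"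
    using lpo_iso_trans[OF _ assms] lpo_iso_trans[OF _ lpo_iso_sym[OF assms]] by (intro ext iffI) auto
  then show ?thesis unfolding rep_def by (rule arg_cong[where f = Eps])
qed

lemma rep_in_obs: "lposet X \<Longrightarrow> rep X \<in> obs"
  using rep_lposet rep_iso rep_cong[of "rep X" X] unfolding obs_def by blast

lemma obs_lposet: "X \<in> obs \<Longrightarrow> lposet X"
  unfolding obs_def by simp

lemma homD: "f \<in> hom X Y \<Longrightarrow> order_emb X Y f" "f \<in> hom X Y \<Longrightarrow> f \<in> extensional (lcarrier X)"
  unfolding hom_def by auto

lemma hom_in: "f \<in> hom X Y \<Longrightarrow> x \<in> lcarrier X \<Longrightarrow> f x \<in> lcarrier Y"
  using order_embD(1)[OF homD(1)] by blast

lemma hom_inj: "X \<in> obs \<Longrightarrow> f \<in> hom X Y \<Longrightarrow> inj_on f (lcarrier X)"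
  using order_emb_inj obs_lposet homD(1) by blast

lemma hom_eqI:
  assumes "f \<in> hom X Y" "g \<in> hom X Y" "\<And>x. x \<in> lcarrier X \<Longrightarrow> f x = g x" shows "f = g"
  using extensionalityI[OF homD(2) homD(2)] assms by blast

lemma comp_apply: "x \<in> lcarrier X \<Longrightarrow> comp X g f x = g (f x)"
  by (simp add: comp_def compose_def)

lemma comp_eqI:
  assumes "u \<in> extensional (lcarrier X)" "\<And>x. x \<in> lcarrier X \<Longrightarrow> g (f x) = u x"
  shows "comp X g f = u"
  using assms by (intro extensionalityI[OF _ assms(1)]) (auto simp: comp_def compose_def)

lemma comp_hom: "f \<in> hom X Y \<Longrightarrow> g \<in> hom Y Z \<Longrightarrow> comp X g f \<in> hom X Z"
  unfolding hom_def comp_def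
  by (auto intro: order_emb_cong[OF order_emb_comp] simp: compose_def)

lemma idm_hom: "X \<in> obs \<Longrightarrow> idm X \<in> hom X X"
  using lposetD(2)[OF obs_lposet] unfolding hom_def idm_def order_emb_def by auto

section \<open>The functor \<open>\<delta>\<close>\<close>

lemma draw_simps:
  "lcarrier (draw X) = Inl ` lcarrier X \<union> {Inr (K, a) | K a. K \<subseteq> lcarrier X \<and> antichain X K}"
  "lle (draw X) = draw_le X" "llab (draw X) = draw_lab X"
  by (simp_all add: draw_def)

lemma draw_le_trans:
  assumes X: "lposet X" and "x \<in> lcarrier (draw X)" "y \<in> lcarrier (draw X)" "z \<in> lcarrier (draw X)"
    and "draw_le X x y" "draw_le X y z"
  shows "draw_le X x z"
  using assms(2-)
  by (cases x; cases y; cases z) (auto simp: draw_simps, (meson lposetD(4)[OF X] subsetD)+)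

lemma draw_lposet:
  assumes X: "lposet (X :: ('e, 'a::finite) lposet)" shows "lposet (draw X)"
  unfolding lposet_def
proof (intro conjI ballI impI)
  have "lcarrier (draw X) \<subseteq> Inl ` lcarrier X \<union> Inr ` (Pow (lcarrier X) \<times> UNIV)"
    by (auto simp: draw_simps)
  then show "finite (lcarrier (draw X))"
    by (rule finite_subset) (simp add: lposetD(1)[OF X])
  fix x y z assume x: "x \<in> lcarrier (draw X)" and y: "y \<in> lcarrier (draw X)"
    and z: "z \<in> lcarrier (draw X)"
  show "lle (draw X) x x"
    using x by (cases x) (auto simp: draw_simps intro: lposetD(2)[OF X])
  show "x = y" if "lle (draw X) x y \<and> lle (draw X) y x"
    using x y that by (cases x; cases y) (auto simp: draw_simps intro: lposetD(3)[OF X])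
  show "lle (draw X) x z" if "lle (draw X) x y \<and> lle (draw X) y z"
    using draw_le_trans[OF X x y z] that by (simp add: draw_simps)
qed

lemma antichain_image:
  assumes "order_emb X Y s" "K \<subseteq> lcarrier X" "antichain X K"
  shows "antichain Y (s ` K)"
  unfolding antichain_def
proof (intro ballI impI)
  fix u v assume "u \<in> s ` K" "v \<in> s ` K" "lle Y u v"
  then obtain k l where "k \<in> K" "l \<in> K" "u = s k" "v = s l" "lle Y (s k) (s l)" by blast
  then show "u = v"
    using assms order_embD(3)[OF assms(1), of k l] unfolding antichain_def by blast
qed

lemma antichain_preimage:
  assumes "lposet D" "order_emb D B p" "antichain B K"
  shows "antichain D {d \<in> lcarrier D. p d \<in> K}"
  unfolding antichain_def
proof (intro ballI impI)
  fix d e assume d: "d \<in> {d \<in> lcarrier D. p d \<in> K}" and e: "e \<in> {d \<in> lcarrier D. p d \<in> K}"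
    and "lle D d e"
  then have "p d = p e"
    using assms(3) order_embD(3)[OF assms(2), of d e] unfolding antichain_def by blast
  then show "d = e" using order_emb_inj[OF assms(1,2)] d e by (auto dest: inj_onD)
qed

lemma draw_map_emb:
  assumes "lposet X" "order_emb X Y s"
  shows "order_emb (draw X) (draw Y) (draw_map s)"
proof -
  have inj: "inj_on s (lcarrier X)" using order_emb_inj[OF assms] .
  have "draw_map s x \<in> lcarrier (draw Y)" if "x \<in> lcarrier (draw X)" for x
    using that antichain_image[OF assms(2)] order_embD(1)[OF assms(2)] by (auto simp: draw_simps) blast
  moreover have "llab (draw Y) (draw_map s x) = llab (draw X) x" if "x \<in> lcarrier (draw X)" for x
    using that order_embD(2)[OF assms(2)] by (auto simp: draw_simps)
  moreover have "lle (draw Y) (draw_map s x) (draw_map s y) = lle (draw X) x y"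
    if "x \<in> lcarrier (draw X)" "y \<in> lcarrier (draw X)" for x y
    using that order_embD(3)[OF assms(2)] inj_on_image_eq_iff[OF inj]
    by (cases x; cases y) (auto simp: draw_simps subset_iff)
  ultimately show ?thesis unfolding order_emb_def by blast
qed

lemma draw_map_idm: "x \<in> lcarrier (draw X) \<Longrightarrow> draw_map (idm X) x = x"
  by (auto simp: draw_simps idm_def)

lemma draw_map_comp:
  "x \<in> lcarrier (draw X) \<Longrightarrow> draw_map (comp X t s) x = draw_map t (draw_map s x)"
  by (auto simp: draw_simps comp_def compose_def image_image subset_iff intro!: image_cong)

lemma delta_in_obs: "(X :: (nat, 'a::finite) lposet) \<in> obs \<Longrightarrow> delta X \<in> obs"
  unfolding delta_def by (intro rep_in_obs draw_lposet obs_lposet)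

lemma bij_betw_delta_iso: "(X :: (nat, 'a::finite) lposet) \<in> obs \<Longrightarrow>
    bij_betw (delta_iso X) (lcarrier (draw X)) (lcarrier (delta X))"
  and order_emb_delta_iso: "(X :: (nat, 'a::finite) lposet) \<in> obs \<Longrightarrow>
    order_emb (draw X) (delta X) (delta_iso X)"
proof -
  assume "X \<in> obs"
  then have "lpo_iso (draw X) (delta X)"
    unfolding delta_def by (rule lpo_iso_sym[OF rep_iso[OF draw_lposet[OF obs_lposet]]])
  then have "\<exists>f. bij_betw f (lcarrier (draw X)) (lcarrier (delta X)) \<and> order_emb (draw X) (delta X) f"
    unfolding lpo_iso_def .
  from someI_ex[OF this]
  show "bij_betw (delta_iso X) (lcarrier (draw X)) (lcarrier (delta X))"
    and "order_emb (draw X) (delta X) (delta_iso X)"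
    unfolding delta_iso_def by auto
qed

lemma delta_carrierE:
  assumes "(X :: (nat, 'a::finite) lposet) \<in> obs" "y \<in> lcarrier (delta X)"
  obtains x where "x \<in> lcarrier (draw X)" "y = delta_iso X x"
  using assms bij_betw_delta_iso[OF assms(1)] unfolding bij_betw_def by blast

lemma delta_mor_delta_iso:
  assumes "(X :: (nat, 'a::finite) lposet) \<in> obs" "x \<in> lcarrier (draw X)"
  shows "delta_mor X Y s (delta_iso X x) = delta_iso Y (draw_map s x)"
  using assms bij_betw_delta_iso[OF assms(1)] unfolding delta_mor_def bij_betw_def
  by (auto simp: inv_into_f_f)

lemma delta_mor_hom:
  assumes X: "(X :: (nat, 'a::finite) lposet) \<in> obs" and Y: "Y \<in> obs" and s: "s \<in> hom X Y"
  shows "delta_mor X Y s \<in> hom (delta X) (delta Y)"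
proof -
  let ?inv = "inv_into (lcarrier (draw X)) (delta_iso X)"
  have "order_emb (delta X) (delta Y) (\<lambda>y. delta_iso Y (draw_map s (?inv y)))"
    by (rule order_emb_comp[OF order_emb_comp[OF
          order_emb_inv_into[OF bij_betw_delta_iso[OF X] order_emb_delta_iso[OF X]]
          draw_map_emb[OF obs_lposet[OF X] homD(1)[OF s]]] order_emb_delta_iso[OF Y]])
  then have "order_emb (delta X) (delta Y) (delta_mor X Y s)"
    by (rule order_emb_cong) (simp add: delta_mor_def)
  then show ?thesis unfolding hom_def delta_mor_def by simp
qed

lemma delta_mor_idm:
  assumes X: "(X :: (nat, 'a::finite) lposet) \<in> obs"
  shows "delta_mor X X (idm X) = idm (delta X)"
proof (rule hom_eqI[OF delta_mor_hom[OF X X idm_hom[OF X]] idm_hom[OF delta_in_obs[OF X]]])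
  fix y assume "y \<in> lcarrier (delta X)"
  then obtain x where "x \<in> lcarrier (draw X)" "y = delta_iso X x"
    using delta_carrierE[OF X] by blast
  then have "delta_mor X X (idm X) y = y"
    by (simp add: delta_mor_delta_iso[OF X] draw_map_idm)
  then show "delta_mor X X (idm X) y = idm (delta X) y"
    using \<open>y \<in> lcarrier (delta X)\<close> by (simp add: idm_def)
qed

lemma delta_mor_comp:
  assumes X: "(X :: (nat, 'a::finite) lposet) \<in> obs" and Y: "Y \<in> obs" and Z: "Z \<in> obs"
    and s: "s \<in> hom X Y" and t: "t \<in> hom Y Z"
  shows "delta_mor X Z (comp X t s) = comp (delta X) (delta_mor Y Z t) (delta_mor X Y s)"
proof (rule hom_eqI[OF delta_mor_hom[OF X Z comp_hom[OF s t]]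
      comp_hom[OF delta_mor_hom[OF X Y s] delta_mor_hom[OF Y Z t]]])
  fix y assume "y \<in> lcarrier (delta X)"
  then obtain x where x: "x \<in> lcarrier (draw X)" and y: "y = delta_iso X x"
    using delta_carrierE[OF X] by blast
  have sx: "draw_map s x \<in> lcarrier (draw Y)"
    using order_embD(1)[OF draw_map_emb[OF obs_lposet[OF X] homD(1)[OF s]] x] .
  have "comp (delta X) (delta_mor Y Z t) (delta_mor X Y s) y = delta_mor Y Z t (delta_mor X Y s y)"
    using \<open>y \<in> lcarrier (delta X)\<close> by (rule comp_apply)
  also have "\<dots> = delta_iso Z (draw_map t (draw_map s x))"
    unfolding y delta_mor_delta_iso[OF X x] delta_mor_delta_iso[OF Y sx] ..
  also have "\<dots> = delta_mor X Z (comp X t s) y"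
    unfolding y delta_mor_delta_iso[OF X x] draw_map_comp[OF x] ..
  finally show "delta_mor X Z (comp X t s) y = comp (delta X) (delta_mor Y Z t) (delta_mor X Y s) y"
    by (rule sym)
qed

section \<open>Pullbacks of sets\<close>

lemma set_pullbackI:
  assumes "\<And>d. d \<in> XD \<Longrightarrow> f (p d) = g (q d)" and "inj_on p XD"
    and "\<And>b c. b \<in> XB \<Longrightarrow> c \<in> XC \<Longrightarrow> f b = g c \<Longrightarrow> \<exists>d\<in>XD. p d = b \<and> q d = c"
  shows "set_pullback XA XB XC XD f g p q"
  unfolding set_pullback_def
proof (intro conjI ballI impI)
  fix b c assume "b \<in> XB" "c \<in> XC" "f b = g c"
  then show "\<exists>!d. d \<in> XD \<and> p d = b \<and> q d = c"
    using assms(3) inj_onD[OF assms(2)] by blast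
qed (rule assms(1))

lemma set_pullbackD:
  assumes "set_pullback XA XB XC XD f g p q"
  shows "d \<in> XD \<Longrightarrow> f (p d) = g (q d)"
    and "b \<in> XB \<Longrightarrow> c \<in> XC \<Longrightarrow> f b = g c \<Longrightarrow> \<exists>!d. d \<in> XD \<and> p d = b \<and> q d = c"
  using assms unfolding set_pullback_def by blast+

lemma set_pullback_preimage:
  assumes pb: "set_pullback XA XB XC XD f g p q" and g: "inj_on g XC" and q: "q ` XD \<subseteq> XC"
    and S: "S \<subseteq> XB" and T: "T \<subseteq> XC" and ST: "f ` S = g ` T"
  shows "p ` {d \<in> XD. p d \<in> S} = S" and "q ` {d \<in> XD. p d \<in> S} = T"
proof -
  have lift: "\<exists>d\<in>XD. p d = b \<and> q d = c" if "b \<in> S" "c \<in> T" "f b = g c" for b c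
    using set_pullbackD(2)[OF pb] that S T by blast
  show "p ` {d \<in> XD. p d \<in> S} = S"
  proof (intro equalityI subsetI)
    fix b assume b: "b \<in> S"
    then have "f b \<in> g ` T" using ST by blast
    then obtain c where "c \<in> T" "f b = g c" by blast
    then show "b \<in> p ` {d \<in> XD. p d \<in> S}" using lift[OF b] b by blast
  qed blast
  show "q ` {d \<in> XD. p d \<in> S} = T"
  proof (intro equalityI subsetI)
    fix c assume "c \<in> q ` {d \<in> XD. p d \<in> S}"
    then obtain d where d: "d \<in> XD" "p d \<in> S" "c = q d" by blast
    then have "g (q d) \<in> g ` T" using ST set_pullbackD(1)[OF pb] by (metis imageI)
    then obtain c' where "c' \<in> T" "g (q d) = g c'" by blast
    moreover have "q d \<in> XC" using q d(1) by blast
    ultimately show "c \<in> T" using inj_onD[OF g] d(3) T by blast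
  next
    fix c assume c: "c \<in> T"
    then have "g c \<in> f ` S" using ST by blast
    then obtain b where "b \<in> S" "f b = g c" by (metis imageE)
    then show "c \<in> q ` {d \<in> XD. p d \<in> S}" using lift[OF _ c] by blast
  qed
qed

lemma set_pullback_finite_subsets:
  assumes pb: "set_pullback XA XB XC XD f g p q" and p: "inj_on p XD" and g: "inj_on g XC"
    and q: "q ` XD \<subseteq> XC"
  shows "set_pullback {S. finite S \<and> S \<subseteq> XA} {S. finite S \<and> S \<subseteq> XB} {S. finite S \<and> S \<subseteq> XC}
    {S. finite S \<and> S \<subseteq> XD} (image f) (image g) (image p) (image q)"
proof (rule set_pullbackI)
  show "f ` p ` R = g ` q ` R" if "R \<in> {S. finite S \<and> S \<subseteq> XD}" for R
    unfolding image_image using that set_pullbackD(1)[OF pb] by (intro image_cong) auto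
  show "inj_on (image p) {S. finite S \<and> S \<subseteq> XD}"
    by (rule inj_onI) (use inj_on_image_eq_iff[OF p] in blast)
  fix S T assume S: "S \<in> {S. finite S \<and> S \<subseteq> XB}" and T: "T \<in> {S. finite S \<and> S \<subseteq> XC}"
    and ST: "f ` S = g ` T"
  let ?R = "{d \<in> XD. p d \<in> S}"
  have "S \<subseteq> XB" "T \<subseteq> XC" using S T by simp_all
  note R = set_pullback_preimage[OF pb g q this ST]
  have "inj_on p ?R" by (rule inj_on_subset[OF p]) blast
  moreover have "finite (p ` ?R)" using S R(1) by simp
  ultimately have "finite ?R" by (rule finite_imageD[rotated])
  then show "\<exists>R\<in>{S. finite S \<and> S \<subseteq> XD}. p ` R = S \<and> q ` R = T"
    using R by (intro bexI[of _ ?R]) auto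
qed

lemma set_pullback_times:
  assumes "set_pullback XA XB XC XD f g p q" and "set_pullback YA YB YC YD f' g' p' q'"
  shows "set_pullback (XA \<times> YA) (XB \<times> YB) (XC \<times> YC) (XD \<times> YD)
    (map_prod f f') (map_prod g g') (map_prod p p') (map_prod q q')"
  unfolding set_pullback_def
proof (intro conjI ballI impI)
  show "map_prod f f' (map_prod p p' d) = map_prod g g' (map_prod q q' d)" if "d \<in> XD \<times> YD" for d
    using that set_pullbackD(1)[OF assms(1)] set_pullbackD(1)[OF assms(2)] by (cases d) simp
  fix b c assume b: "b \<in> XB \<times> YB" and c: "c \<in> XC \<times> YC" and bc: "map_prod f f' b = map_prod g g' c"
  obtain b1 b2 where b': "b = (b1, b2)" by (rule prod.exhaust)
  obtain c1 c2 where c': "c = (c1, c2)" by (rule prod.exhaust)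
  have "b1 \<in> XB" "c1 \<in> XC" "f b1 = g c1" "b2 \<in> YB" "c2 \<in> YC" "f' b2 = g' c2"
    using b c bc unfolding b' c' by simp_all
  then have "\<exists>!d. d \<in> XD \<and> p d = b1 \<and> q d = c1" "\<exists>!d. d \<in> YD \<and> p' d = b2 \<and> q' d = c2"
    using set_pullbackD(2)[OF assms(1)] set_pullbackD(2)[OF assms(2)] by simp_all
  then obtain d1 d2 where d1: "d1 \<in> XD" "p d1 = b1" "q d1 = c1"
    and u1: "\<And>d. d \<in> XD \<Longrightarrow> p d = b1 \<Longrightarrow> q d = c1 \<Longrightarrow> d = d1"
    and d2: "d2 \<in> YD" "p' d2 = b2" "q' d2 = c2"
    and u2: "\<And>d. d \<in> YD \<Longrightarrow> p' d = b2 \<Longrightarrow> q' d = c2 \<Longrightarrow> d = d2"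
    by (elim ex1E) blast
  show "\<exists>!d. d \<in> XD \<times> YD \<and> map_prod p p' d = b \<and> map_prod q q' d = c"
  proof (rule ex1I[of _ "(d1, d2)"])
    show "(d1, d2) \<in> XD \<times> YD \<and> map_prod p p' (d1, d2) = b \<and> map_prod q q' (d1, d2) = c"
      using d1 d2 b' c' by simp
  next
    fix d assume "d \<in> XD \<times> YD \<and> map_prod p p' d = b \<and> map_prod q q' d = c"
    then show "d = (d1, d2)" using u1 u2 b' c' by (cases d) simp
  qed
qed

lemma set_pullback_bij_transport:
  assumes pb: "set_pullback XA XB XC XD f g p q"
    and maps: "f ` XB \<subseteq> XA" "g ` XC \<subseteq> XA" "p ` XD \<subseteq> XB" "q ` XD \<subseteq> XC"
    and bij: "bij_betw hA XA YA" "bij_betw hB XB YB" "bij_betw hC XC YC" "bij_betw hD XD YD"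
    and f': "\<And>x. x \<in> XB \<Longrightarrow> f' (hB x) = hA (f x)" and g': "\<And>x. x \<in> XC \<Longrightarrow> g' (hC x) = hA (g x)"
    and p': "\<And>x. x \<in> XD \<Longrightarrow> p' (hD x) = hB (p x)" and q': "\<And>x. x \<in> XD \<Longrightarrow> q' (hD x) = hC (q x)"
  shows "set_pullback YA YB YC YD f' g' p' q'"
  unfolding set_pullback_def
proof (intro conjI ballI impI)
  fix d' assume "d' \<in> YD"
  then obtain d where d: "d \<in> XD" "d' = hD d" using bij(4) unfolding bij_betw_def by blast
  have "p d \<in> XB" "q d \<in> XC" using maps(3,4) d(1) by blast+
  then show "f' (p' d') = g' (q' d')" using d set_pullbackD(1)[OF pb] f' g' p' q' by simp
next
  fix b' c' assume "b' \<in> YB" "c' \<in> YC" and bc': "f' b' = g' c'"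
  then obtain b c where b: "b \<in> XB" "b' = hB b" and c: "c \<in> XC" "c' = hC c"
    using bij(2,3) unfolding bij_betw_def by blast
  have "f b \<in> XA" "g c \<in> XA" using maps(1,2) b c by blast+
  moreover have "hA (f b) = hA (g c)" using bc' b c f' g' by simp
  ultimately have "f b = g c" using bij(1) unfolding bij_betw_def by (blast dest: inj_onD)
  obtain d where d: "d \<in> XD" "p d = b" "q d = c"
    and uniq: "\<And>e. e \<in> XD \<Longrightarrow> p e = b \<Longrightarrow> q e = c \<Longrightarrow> e = d"
    using set_pullbackD(2)[OF pb b(1) c(1) \<open>f b = g c\<close>] by (elim ex1E) blast
  show "\<exists>!d'. d' \<in> YD \<and> p' d' = b' \<and> q' d' = c'"
  proof (rule ex1I[of _ "hD d"])
    show "hD d \<in> YD \<and> p' (hD d) = b' \<and> q' (hD d) = c'"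
      using d b c p' q' bij(4) unfolding bij_betw_def by auto
  next
    fix e' assume e': "e' \<in> YD \<and> p' e' = b' \<and> q' e' = c'"
    then obtain e where e: "e \<in> XD" "e' = hD e" using bij(4) unfolding bij_betw_def by blast
    have "p e \<in> XB" "q e \<in> XC" using maps(3,4) e(1) by blast+
    moreover have "hB (p e) = hB b" "hC (q e) = hC c" using e' e b c p' q' by auto
    ultimately have "p e = b" "q e = c"
      using b(1) c(1) bij(2,3) unfolding bij_betw_def by (blast dest: inj_onD)+
    then show "e' = hD d" using uniq e by blast
  qed
qed

section \<open>Pullbacks in \<open>\<X>\<close>\<close>

lemma is_pullbackD:
  assumes "is_pullback A B C D f g p q"
  shows "A \<in> obs" "B \<in> obs" "C \<in> obs" "D \<in> obs"
    "f \<in> hom B A" "g \<in> hom C A" "p \<in> hom D B" "q \<in> hom D C" "comp D f p = comp D g q"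
    "\<And>E u v. E \<in> obs \<Longrightarrow> u \<in> hom E B \<Longrightarrow> v \<in> hom E C \<Longrightarrow> comp E f u = comp E g v \<Longrightarrow>
        \<exists>!h. h \<in> hom E D \<and> comp E p h = u \<and> comp E q h = v"
  using assms unfolding is_pullback_def by blast+

lemma singleton_obs:
  obtains E :: "(nat, 'a) lposet" and e where "E \<in> obs" "lcarrier E = {e}" "llab E e = l"
proof -
  define S :: "(nat, 'a) lposet" where "S = \<lparr>lcarrier = {0}, lle = (\<lambda>x y. True), llab = (\<lambda>_. l)\<rparr>"
  have S: "lposet S" unfolding lposet_def S_def by simp
  obtain \<phi> where \<phi>: "bij_betw \<phi> (lcarrier (rep S)) (lcarrier S)" "order_emb (rep S) S \<phi>"
    using rep_iso[OF S] unfolding lpo_iso_def by blast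
  have "0 \<in> \<phi> ` lcarrier (rep S)" using \<phi>(1) unfolding bij_betw_def S_def by simp
  then obtain e where e: "e \<in> lcarrier (rep S)" "\<phi> e = 0" by auto
  have "\<phi> x = \<phi> e" if "x \<in> lcarrier (rep S)" for x
    using \<phi>(1) that e unfolding bij_betw_def S_def by auto
  then have "lcarrier (rep S) = {e}"
    using \<phi>(1) e(1) unfolding bij_betw_def inj_on_def by blast
  moreover have "llab (rep S) e = l" using order_embD(2)[OF \<phi>(2) e(1)] by (simp add: S_def)
  ultimately show ?thesis using that rep_in_obs[OF S] by blast
qed

lemma restrict_const_hom:
  assumes E: "E \<in> obs" "lcarrier E = {e}" and B: "B \<in> obs" "b \<in> lcarrier B"
    and l: "llab B b = llab E e"
  shows "restrict (\<lambda>_. b) (lcarrier E) \<in> hom E B"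
proof -
  have "lle B b b" "lle E e e" using lposetD(2)[OF obs_lposet] E B by auto
  then show ?thesis unfolding hom_def order_emb_def using E(2) B(2) l by simp
qed

lemma is_pullback_imp_set_pullback_carrier:
  assumes pb: "is_pullback A B C D f g p q"
  shows "set_pullback (lcarrier A) (lcarrier B) (lcarrier C) (lcarrier D) f g p q"
proof (rule set_pullbackI)
  note P = is_pullbackD[OF pb]
  show "f (p d) = g (q d)" if "d \<in> lcarrier D" for d
    using fun_cong[OF P(9), of d] that by (simp add: comp_apply)
  show "inj_on p (lcarrier D)" using hom_inj[OF P(4,7)] .
  fix b c assume b: "b \<in> lcarrier B" and c: "c \<in> lcarrier C" and fg: "f b = g c"
  \<comment> \<open>probe with the one-point object carrying the common label of \<open>b\<close> and \<open>c\<close>\<close>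
  obtain E e where E: "E \<in> obs" "lcarrier E = {e}" "llab E e = llab B b"
    by (rule singleton_obs)
  have "llab C c = llab B b"
    using order_embD(2)[OF homD(1)[OF P(5)] b] order_embD(2)[OF homD(1)[OF P(6)] c] fg by simp
  then have u: "restrict (\<lambda>_. b) (lcarrier E) \<in> hom E B"
    and v: "restrict (\<lambda>_. c) (lcarrier E) \<in> hom E C"
    using restrict_const_hom[OF E(1,2) P(2) b] restrict_const_hom[OF E(1,2) P(3) c] E(3) by simp_all
  have "comp E f (restrict (\<lambda>_. b) (lcarrier E)) = comp E g (restrict (\<lambda>_. c) (lcarrier E))"
    using fg unfolding comp_def compose_def by (intro restrict_ext) simp
  then obtain h where h: "h \<in> hom E D" "comp E p h = restrict (\<lambda>_. b) (lcarrier E)"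
     "comp E q h = restrict (\<lambda>_. c) (lcarrier E)"
    using P(10)[OF E(1) u v] by blast
  have "h e \<in> lcarrier D" "p (h e) = b" "q (h e) = c"
    using hom_in[OF h(1)] fun_cong[OF h(2), of e] fun_cong[OF h(3), of e] E(2)
    by (simp_all add: comp_apply)
  then show "\<exists>d\<in>lcarrier D. p d = b \<and> q d = c" by blast
qed

lemma is_pullback_if_set_pullback_carrier:
  assumes obs: "A \<in> obs" "B \<in> obs" "C \<in> obs" "D \<in> obs"
    and homs: "f \<in> hom B A" "g \<in> hom C A" "p \<in> hom D B" "q \<in> hom D C"
    and comm: "comp D f p = comp D g q"
    and spb: "set_pullback (lcarrier A) (lcarrier B) (lcarrier C) (lcarrier D) f g p q"
  shows "is_pullback A B C D f g p q"
proof -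
  have "\<exists>!h. h \<in> hom E D \<and> comp E p h = u \<and> comp E q h = v"
    if u: "u \<in> hom E B" and v: "v \<in> hom E C" and uv: "comp E f u = comp E g v" for E u v
  proof -
    have lift: "\<exists>!d. d \<in> lcarrier D \<and> p d = u e \<and> q d = v e" if "e \<in> lcarrier E" for e
      using set_pullbackD(2)[OF spb hom_in[OF u that] hom_in[OF v that]] fun_cong[OF uv, of e] that
      by (simp add: comp_apply)
    define h where "h = restrict (\<lambda>e. THE d. d \<in> lcarrier D \<and> p d = u e \<and> q d = v e) (lcarrier E)"
    have h: "h e \<in> lcarrier D" "p (h e) = u e" "q (h e) = v e" if "e \<in> lcarrier E" for e
      using theI'[OF lift[OF that]] that by (simp_all add: h_def)
    have "order_emb E D h" by (rule order_emb_factor[OF homD(1)[OF homs(3)] homD(1)[OF u] h(1,2)])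
    then have hom: "h \<in> hom E D" unfolding hom_def h_def by simp
    show ?thesis
    proof (rule ex1I[of _ h])
      show "h \<in> hom E D \<and> comp E p h = u \<and> comp E q h = v"
        using hom h(2,3) by (auto intro: comp_eqI homD(2)[OF u] homD(2)[OF v])
    next
      fix h' assume h': "h' \<in> hom E D \<and> comp E p h' = u \<and> comp E q h' = v"
      show "h' = h"
      proof (rule hom_eqI[OF _ hom])
        show "h' \<in> hom E D" using h' by blast
        fix e assume e: "e \<in> lcarrier E"
        have "h' e \<in> lcarrier D \<and> p (h' e) = u e \<and> q (h' e) = v e"
          using h' hom_in[of h' E D] e comp_apply[OF e, of p h'] comp_apply[OF e, of q h'] by auto
        then show "h' e = h e" using lift[OF e] h[OF e] by blast
      qed
    qed
  qed
  then show ?thesis unfolding is_pullback_def using obs homs comm by blast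
qed

lemma kernel_pair_is_pullback:
  assumes "B \<in> obs" "D \<in> obs" "p \<in> hom D B"
  shows "is_pullback B D D D p p (idm D) (idm D)"
proof (rule is_pullback_if_set_pullback_carrier)
  show "set_pullback (lcarrier B) (lcarrier D) (lcarrier D) (lcarrier D) p p (idm D) (idm D)"
  proof (rule set_pullbackI)
    show "inj_on (idm D) (lcarrier D)" by (simp add: idm_def inj_on_def)
    fix b c assume "b \<in> lcarrier D" "c \<in> lcarrier D" "p b = p c"
    then show "\<exists>d\<in>lcarrier D. idm D d = b \<and> idm D d = c"
      using inj_onD[OF hom_inj[OF assms(2,3)]] by (auto simp: idm_def)
  qed simp
qed (use assms idm_hom in simp_all)

lemma set_pullback_draw:
  fixes A B C D :: "(nat, 'a::finite) lposet"
  assumes pb: "is_pullback A B C D f g p q"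
  shows "set_pullback (lcarrier (draw A)) (lcarrier (draw B)) (lcarrier (draw C)) (lcarrier (draw D))
    (draw_map f) (draw_map g) (draw_map p) (draw_map q)"
proof (rule set_pullbackI)
  note P = is_pullbackD[OF pb] and spb = is_pullback_imp_set_pullback_carrier[OF pb]
  show "draw_map f (draw_map p z) = draw_map g (draw_map q z)" if "z \<in> lcarrier (draw D)" for z
    using draw_map_comp[OF that, of f p] draw_map_comp[OF that, of g q] P(9) by simp
  show "inj_on (draw_map p) (lcarrier (draw D))"
    by (rule order_emb_inj[OF draw_lposet[OF obs_lposet[OF P(4)]]
          draw_map_emb[OF obs_lposet[OF P(4)] homD(1)[OF P(7)]]])
  fix x y assume x: "x \<in> lcarrier (draw B)" and y: "y \<in> lcarrier (draw C)"
    and xy: "draw_map f x = draw_map g y"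
  consider (old) b c where "x = Inl b" "y = Inl c"
    | (new) K a K' a' where "x = Inr (K, a)" "y = Inr (K', a')"
    using xy by (cases x; cases y) (auto split: prod.splits)
  then show "\<exists>z\<in>lcarrier (draw D). draw_map p z = x \<and> draw_map q z = y"
  proof cases
    case old
    then have "b \<in> lcarrier B" "c \<in> lcarrier C" "f b = g c" using x y xy by (auto simp: draw_simps)
    then obtain d where "d \<in> lcarrier D" "p d = b" "q d = c"
      using set_pullbackD(2)[OF spb] by blast
    then have "Inl d \<in> lcarrier (draw D)" "draw_map p (Inl d) = x" "draw_map q (Inl d) = y"
      using old by (simp_all add: draw_simps)
    then show ?thesis by blast
  next
    case new
    then have K: "K \<subseteq> lcarrier B" "antichain B K" and K': "K' \<subseteq> lcarrier C"
      and KK: "f ` K = g ` K'" "a' = a"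
      using x y xy by (auto simp: draw_simps)
    let ?L = "{d \<in> lcarrier D. p d \<in> K}"
    have "q ` lcarrier D \<subseteq> lcarrier C" using hom_in[OF P(8)] by blast
    note L = set_pullback_preimage[OF spb hom_inj[OF P(3,6)] this K(1) K' KK(1)]
    have "antichain D ?L" by (rule antichain_preimage[OF obs_lposet[OF P(4)] homD(1)[OF P(7)] K(2)])
    then have "Inr (?L, a) \<in> lcarrier (draw D)" by (auto simp: draw_simps)
    moreover have "draw_map p (Inr (?L, a)) = x" "draw_map q (Inr (?L, a)) = y"
      using L new KK(2) by simp_all
    ultimately show ?thesis by blast
  qed
qed

lemma is_pullback_delta:
  fixes A B C D :: "(nat, 'a::finite) lposet"
  assumes pb: "is_pullback A B C D f g p q"
  shows "is_pullback (delta A) (delta B) (delta C) (delta D)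
     (delta_mor B A f) (delta_mor C A g) (delta_mor D B p) (delta_mor D C q)"
proof -
  note P = is_pullbackD[OF pb]
  have draw_maps: "draw_map s ` lcarrier (draw X) \<subseteq> lcarrier (draw Y)"
    if "X \<in> obs" "s \<in> hom X Y" for X Y :: "(nat, 'a) lposet" and s
    using order_embD(1)[OF draw_map_emb[OF obs_lposet homD(1)]] that by blast
  have "set_pullback (lcarrier (delta A)) (lcarrier (delta B)) (lcarrier (delta C)) (lcarrier (delta D))
      (delta_mor B A f) (delta_mor C A g) (delta_mor D B p) (delta_mor D C q)"
    by (rule set_pullback_bij_transport[OF set_pullback_draw[OF pb]
          draw_maps[OF P(2,5)] draw_maps[OF P(3,6)] draw_maps[OF P(4,7)] draw_maps[OF P(4,8)]
          bij_betw_delta_iso[OF P(1)] bij_betw_delta_iso[OF P(2)] bij_betw_delta_iso[OF P(3)]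
          bij_betw_delta_iso[OF P(4)]])
      (simp_all add: delta_mor_delta_iso P(2-4))
  then show ?thesis
    using delta_mor_comp[OF P(4,2,1,7,5)] delta_mor_comp[OF P(4,3,1,8,6)] P(9)
    by (intro is_pullback_if_set_pullback_carrier delta_in_obs delta_mor_hom P(1-8)) simp_all
qed

section \<open>Presheaves\<close>

lemma is_functorI:
  assumes "\<And>X Y s x. X \<in> obs \<Longrightarrow> Y \<in> obs \<Longrightarrow> s \<in> hom X Y \<Longrightarrow> x \<in> pobj F X \<Longrightarrow>
      pmor F X Y s x \<in> pobj F Y"
    and "\<And>X x. X \<in> obs \<Longrightarrow> x \<in> pobj F X \<Longrightarrow> pmor F X X (idm X) x = x"
    and "\<And>X Y Z s t x. X \<in> obs \<Longrightarrow> Y \<in> obs \<Longrightarrow> Z \<in> obs \<Longrightarrow> s \<in> hom X Y \<Longrightarrow> t \<in> hom Y Z \<Longrightarrow>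
      x \<in> pobj F X \<Longrightarrow> pmor F X Z (comp X t s) x = pmor F Y Z t (pmor F X Y s x)"
  shows "is_functor F"
  unfolding is_functor_def using assms by (intro conjI ballI)

lemma is_functorD:
  assumes "is_functor F"
  shows "X \<in> obs \<Longrightarrow> Y \<in> obs \<Longrightarrow> s \<in> hom X Y \<Longrightarrow> x \<in> pobj F X \<Longrightarrow> pmor F X Y s x \<in> pobj F Y"
    and "X \<in> obs \<Longrightarrow> x \<in> pobj F X \<Longrightarrow> pmor F X X (idm X) x = x"
    and "X \<in> obs \<Longrightarrow> Y \<in> obs \<Longrightarrow> Z \<in> obs \<Longrightarrow> s \<in> hom X Y \<Longrightarrow> t \<in> hom Y Z \<Longrightarrow>
      x \<in> pobj F X \<Longrightarrow> pmor F X Z (comp X t s) x = pmor F Y Z t (pmor F X Y s x)"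
  using assms unfolding is_functor_def by simp_all

lemma preserves_pullbacksD:
  assumes "preserves_pullbacks F" "is_pullback A B C D f g p q"
  shows "set_pullback (pobj F A) (pobj F B) (pobj F C) (pobj F D)
    (pmor F B A f) (pmor F C A g) (pmor F D B p) (pmor F D C q)"
  using assms unfolding preserves_pullbacks_def by blast

lemma pmor_inj_on:
  assumes F: "is_functor F" and "preserves_pullbacks F"
    and "B \<in> obs" "D \<in> obs" "p \<in> hom D B"
  shows "inj_on (pmor F D B p) (pobj F D)"
proof (rule inj_onI)
  fix x y assume "x \<in> pobj F D" "y \<in> pobj F D" "pmor F D B p x = pmor F D B p y"
  then obtain z where "z \<in> pobj F D" "pmor F D D (idm D) z = x" "pmor F D D (idm D) z = y"
    using set_pullbackD(2)[OF preserves_pullbacksD[OF assms(2) kernel_pair_is_pullback[OF assms(3-5)]]]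
    by blast
  then show "x = y" using is_functorD(2)[OF F \<open>D \<in> obs\<close>] by simp
qed

lemma PfP_functor:
  assumes F: "is_functor F" shows "is_functor (PfP F)"
proof (rule is_functorI)
  fix X Y s S assume "X \<in> obs" "Y \<in> obs" "s \<in> hom X Y" "S \<in> pobj (PfP F) X"
  then show "pmor (PfP F) X Y s S \<in> pobj (PfP F) Y" using is_functorD(1)[OF F] by (auto simp: PfP_def)
next
  fix X S assume "X \<in> obs" "S \<in> pobj (PfP F) X"
  then have "pmor F X X (idm X) ` S = (\<lambda>x. x) ` S"
    using is_functorD(2)[OF F] by (intro image_cong) (auto simp: PfP_def)
  then show "pmor (PfP F) X X (idm X) S = S" by (simp add: PfP_def)
next
  fix X Y Z s t S assume "X \<in> obs" "Y \<in> obs" "Z \<in> obs" "s \<in> hom X Y" "t \<in> hom Y Z"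
    "S \<in> pobj (PfP F) X"
  then show "pmor (PfP F) X Z (comp X t s) S = pmor (PfP F) Y Z t (pmor (PfP F) X Y s S)"
    using is_functorD(3)[OF F] by (auto simp: PfP_def image_image intro!: image_cong)
qed

lemma PfP_preserves_pullbacks:
  fixes F :: "('a, 'x) psh"
  assumes F: "is_functor F" and PF: "preserves_pullbacks F"
  shows "preserves_pullbacks (PfP F)"
  unfolding preserves_pullbacks_def
proof (intro allI impI)
  fix A B C D :: "(nat, 'a) lposet" and f g p q assume pb: "is_pullback A B C D f g p q"
  note P = is_pullbackD[OF pb]
  have "pmor F D C q ` pobj F D \<subseteq> pobj F C" using is_functorD(1)[OF F P(4,3,8)] by blast
  from set_pullback_finite_subsets[OF preserves_pullbacksD[OF PF pb]
      pmor_inj_on[OF F PF P(2,4,7)] pmor_inj_on[OF F PF P(1,3,6)] this]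
  show "set_pullback (pobj (PfP F) A) (pobj (PfP F) B) (pobj (PfP F) C) (pobj (PfP F) D)
      (pmor (PfP F) B A f) (pmor (PfP F) C A g) (pmor (PfP F) D B p) (pmor (PfP F) D C q)"
    by (simp add: PfP_def)
qed

lemma prodP_functor:
  assumes F: "is_functor F" and G: "is_functor G" shows "is_functor (prodP F G)"
  by (rule is_functorI)
    (auto simp: prodP_def is_functorD[OF F] is_functorD[OF G])

lemma prodP_preserves_pullbacks:
  fixes F :: "('a, 'x) psh" and G :: "('a, 'y) psh"
  assumes F: "preserves_pullbacks F" and G: "preserves_pullbacks G"
  shows "preserves_pullbacks (prodP F G)"
  unfolding preserves_pullbacks_def
proof (intro allI impI)
  fix A B C D :: "(nat, 'a) lposet" and f g p q assume pb: "is_pullback A B C D f g p q"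
  from set_pullback_times[OF preserves_pullbacksD[OF F pb] preserves_pullbacksD[OF G pb]]
  show "set_pullback (pobj (prodP F G) A) (pobj (prodP F G) B) (pobj (prodP F G) C) (pobj (prodP F G) D)
      (pmor (prodP F G) B A f) (pmor (prodP F G) C A g) (pmor (prodP F G) D B p) (pmor (prodP F G) D C q)"
    by (simp add: prodP_def map_prod_def)
qed

lemma ActP_functor: "is_functor ActP"
  by (rule is_functorI) (simp_all add: ActP_def)

lemma ActP_preserves_pullbacks: "preserves_pullbacks ActP"
  unfolding preserves_pullbacks_def set_pullback_def by (simp add: ActP_def)

lemma EP_functor: "is_functor EP"
  by (rule is_functorI)
    (auto simp: EP_def hom_in comp_apply idm_def order_embD(2)[OF homD(1)])

lemma EP_preserves_pullbacks: "preserves_pullbacks EP"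
  unfolding preserves_pullbacks_def
proof (intro allI impI)
  fix A B C D :: "(nat, 'a) lposet" and f g p q assume pb: "is_pullback A B C D f g p q"
  note P = is_pullbackD[OF pb] and spb = is_pullback_imp_set_pullback_carrier[OF pb]
  show "set_pullback (pobj EP A) (pobj EP B) (pobj EP C) (pobj EP D)
      (pmor EP B A f) (pmor EP C A g) (pmor EP D B p) (pmor EP D C q)"
  proof (rule set_pullbackI)
    show "pmor EP B A f (pmor EP D B p x) = pmor EP C A g (pmor EP D C q x)" if "x \<in> pobj EP D" for x
      using that set_pullbackD(1)[OF spb] by (auto simp: EP_def)
    show "inj_on (pmor EP D B p) (pobj EP D)"
      using hom_inj[OF P(4,7)] by (auto simp: EP_def inj_on_def)
    fix y z assume "y \<in> pobj EP B" "z \<in> pobj EP C" "pmor EP B A f y = pmor EP C A g z"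
    then obtain b c where b: "b \<in> lcarrier B" "y = (b, llab B b)" and c: "c \<in> lcarrier C" "z = (c, llab C c)"
      and "f b = g c" "llab B b = llab C c" by (auto simp: EP_def)
    then obtain d where d: "d \<in> lcarrier D" "p d = b" "q d = c"
      using set_pullbackD(2)[OF spb] by blast
    have "llab D d = llab B b" using order_embD(2)[OF homD(1)[OF P(7)] d(1)] d(2) by simp
    then have "(d, llab D d) \<in> pobj EP D" "pmor EP D B p (d, llab D d) = y" "pmor EP D C q (d, llab D d) = z"
      using d b c \<open>llab B b = llab C c\<close> by (auto simp: EP_def)
    then show "\<exists>x\<in>pobj EP D. pmor EP D B p x = y \<and> pmor EP D C q x = z" by blast
  qed
qed

lemma DeltaP_functor:
  assumes F: "is_functor (F :: ('a::finite, 'x) psh)" shows "is_functor (DeltaP F)"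
proof (rule is_functorI)
  fix X Y s x assume "(X :: (nat, 'a) lposet) \<in> obs" "Y \<in> obs" "s \<in> hom X Y" "x \<in> pobj (DeltaP F) X"
  then show "pmor (DeltaP F) X Y s x \<in> pobj (DeltaP F) Y"
    using is_functorD(1)[OF F delta_in_obs delta_in_obs delta_mor_hom] by (simp add: DeltaP_def)
next
  fix X x assume "(X :: (nat, 'a) lposet) \<in> obs" "x \<in> pobj (DeltaP F) X"
  then show "pmor (DeltaP F) X X (idm X) x = x"
    using is_functorD(2)[OF F delta_in_obs] by (simp add: DeltaP_def delta_mor_idm)
next
  fix X Y Z s t x assume "(X :: (nat, 'a) lposet) \<in> obs" "Y \<in> obs" "Z \<in> obs"
    "s \<in> hom X Y" "t \<in> hom Y Z" "x \<in> pobj (DeltaP F) X"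
  then show "pmor (DeltaP F) X Z (comp X t s) x = pmor (DeltaP F) Y Z t (pmor (DeltaP F) X Y s x)"
    using is_functorD(3)[OF F delta_in_obs delta_in_obs delta_in_obs delta_mor_hom delta_mor_hom]
    by (simp add: DeltaP_def delta_mor_comp)
qed

lemma DeltaP_preserves_pullbacks:
  assumes "preserves_pullbacks (F :: ('a::finite, 'x) psh)" shows "preserves_pullbacks (DeltaP F)"
  unfolding preserves_pullbacks_def
  using preserves_pullbacksD[OF assms is_pullback_delta] by (simp add: DeltaP_def)

theorem proposition10:
  fixes P :: "('a::finite, 'x) psh"
  assumes "is_functor P" and "preserves_pullbacks P"
  shows "is_functor (PfP P) \<and> preserves_pullbacks (PfP P) \<and>
         is_functor (DeltaP P) \<and> preserves_pullbacks (DeltaP P) \<and>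
         is_functor (BP P) \<and> preserves_pullbacks (BP P)"
proof -
  have L: "is_functor LP" "preserves_pullbacks LP"
    unfolding LP_def using prodP_functor[OF ActP_functor PfP_functor[OF EP_functor]]
      prodP_preserves_pullbacks[OF ActP_preserves_pullbacks
        PfP_preserves_pullbacks[OF EP_functor EP_preserves_pullbacks]] .
  have \<Delta>: "is_functor (DeltaP P)" "preserves_pullbacks (DeltaP P)"
    using DeltaP_functor[OF assms(1)] DeltaP_preserves_pullbacks[OF assms(2)] .
  have "is_functor (BP P)" "preserves_pullbacks (BP P)"
    unfolding BP_def using PfP_functor[OF prodP_functor[OF L(1) \<Delta>(1)]]
      PfP_preserves_pullbacks[OF prodP_functor[OF L(1) \<Delta>(1)] prodP_preserves_pullbacks[OF L(2) \<Delta>(2)]] .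
  then show ?thesis using PfP_functor[OF assms(1)] PfP_preserves_pullbacks[OF assms] \<Delta> by blast
qed

end
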